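(* Let $0\to U\to M\to N\to 0$ be an exact sequence of graded $R$-modules (graded either in the multigraded or in the standard graded sense). If $U$ and $N$ have Stanley decompositions, then so does $M$, and $$\operatorname{Stdepth} M\ge \min(\operatorname{Stdepth} U,\operatorname{Stdepth} N).$$ Likewise, if $U$ and $N$ have Hilbert decompositions, then so does $M$, and $\operatorname{Hdepth} M\ge \min(\operatorname{Hdepth} U,\operatorname{Hdepth} N)$.
   Context: Let $K$ be a field and $R=K[X_1,\dots,X_n]$, considered either with the multigrading ($\mathbb{Z}^n$-grading with $\deg X_i=e_i$, the $i$-th unit vector) or with the standard grading ($\mathbb{Z}$-grading with $\deg X_i=1$). All modules are finitely generated graded $R$-modules. A graded retract of $R$ is a graded $K$-subalgebra $S\subseteq R$ for which there is a graded $K$-algebra epimorphism $\pi:R\to S$ with $\pi|_S=\mathrm{id}_S$ (in the multigraded case: subalgebras generated by a subset of the indeterminates; in the standard graded case: subalgebras generated by a set of linear forms). A Stanley decomposition of $M$ is a finite family $(S_i,x_i)_{i\in I}$ with $x_i\in M$ homogeneous, $S_i$ a graded retract of $R$, $S_i\cap\operatorname{Ann}(x_i)=0$, and $M=\bigoplus_{i\in I}S_ix_i$ as graded $K$-vector spaces. A Hilbert decomposition of $M$ is a finite family $(S_i,s_i)_{i\in I}$ with $s_i$ a degree ($s_i\in\mathbb{Z}^n$, resp. $\mathbb{Z}$), $S_i$ a graded retract of $R$, and $M\cong\bigoplus_{i\in I}S_i(-s_i)$ as graded $K$-vector spaces. The depth of such a decomposition is $\min_{i\in I}\dim S_i$ (the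 depth of the $R$-module $\bigoplus_i S_i$). $\operatorname{Stdepth}M$ (resp. $\operatorname{Hdepth}M$) is the maximal depth of a Stanley (resp. Hilbert) decomposition of $M$; by convention $\operatorname{Stdepth}0=\infty$ (and likewise for Hdepth). *)

theory Defs
  imports "HOL-Library.Poly_Mapping" "HOL-Library.Function_Algebras" "HOL-Library.Extended_Nat"
begin

text \<open>Polynomials in the variables indexed by the finite type 'v with coefficients in 'k:
  finitely supported maps from monomials (exponent vectors) to coefficients.\<close>
type_synonym ('v, 'k) mpoly = "('v \<Rightarrow>\<^sub>0 nat) \<Rightarrow>\<^sub>0 'k"

definition const :: "'k::zero \<Rightarrow> ('v, 'k) mpoly" where
  "const c = Poly_Mapping.single 0 c"

definition Var :: "'v \<Rightarrow> ('v, 'k::{zero,one}) mpoly" where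
  "Var i = Poly_Mapping.single (Poly_Mapping.single i 1) 1"

definition homog :: "(('v \<Rightarrow>\<^sub>0 nat) \<Rightarrow> 'g) \<Rightarrow> 'g \<Rightarrow> ('v, 'k::zero) mpoly set" where
  "homog mdeg a = {p. \<forall>\<alpha>\<in>Poly_Mapping.keys p. mdeg \<alpha> = a}"

definition mdeg_multi :: "('v \<Rightarrow>\<^sub>0 nat) \<Rightarrow> ('v \<Rightarrow> int)" where
  "mdeg_multi \<alpha> = (\<lambda>i. int (Poly_Mapping.lookup \<alpha> i))"

definition mdeg_std :: "('v \<Rightarrow>\<^sub>0 nat) \<Rightarrow> int" where
  "mdeg_std \<alpha> = int (sum (Poly_Mapping.lookup \<alpha>) (Poly_Mapping.keys \<alpha>))"

definition alg_gen :: "('v, 'k::comm_ring_1) mpoly set \<Rightarrow> ('v, 'k) mpoly set" where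
  "alg_gen L = \<Inter>{T. (\<forall>c. const c \<in> T) \<and> L \<subseteq> T \<and> (\<forall>a\<in>T. \<forall>b\<in>T. a + b \<in> T \<and> a * b \<in> T)}"

definition lin_indep :: "('v, 'k::comm_ring_1) mpoly set \<Rightarrow> bool" where
  "lin_indep L \<longleftrightarrow> finite L \<and>
     (\<forall>a. (\<Sum>l\<in>L. const (a l) * l) = 0 \<longrightarrow> (\<forall>l\<in>L. a l = 0))"

text \<open>Graded retracts. Multigraded case: subalgebras generated by a subset of the
  indeterminates. Standard graded case: subalgebras generated by a set of linear forms.\<close>
definition retract_multi :: "('v, 'k::comm_ring_1) mpoly set \<Rightarrow> bool" where
  "retract_multi S \<longleftrightarrow> (\<exists>A. S = alg_gen (Var ` A))"

definition retract_std :: "('v, 'k::comm_ring_1) mpoly set \<Rightarrow> bool" where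
  "retract_std S \<longleftrightarrow> (\<exists>L. L \<subseteq> homog mdeg_std 1 \<and> S = alg_gen L)"

text \<open>Dimension of a graded retract S: the K-dimension of its space of linear forms
  (which is the Krull dimension of the polynomial ring S in either setting).\<close>
definition rdim :: "('v, 'k::comm_ring_1) mpoly set \<Rightarrow> nat" where
  "rdim S = Max {card L | L. L \<subseteq> S \<inter> homog mdeg_std 1 \<and> lin_indep L}"

definition graded_module ::
  "(('v \<Rightarrow>\<^sub>0 nat) \<Rightarrow> 'g::ab_group_add) \<Rightarrow> (('v, 'k::field) mpoly \<Rightarrow> 'm::ab_group_add \<Rightarrow> 'm)
     \<Rightarrow> ('g \<Rightarrow> 'm set) \<Rightarrow> bool" where
  "graded_module mdeg smul gr \<longleftrightarrow>
     module smul \<and>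
     (\<forall>d. 0 \<in> gr d \<and> (\<forall>x\<in>gr d. \<forall>y\<in>gr d. x + y \<in> gr d)
          \<and> (\<forall>c. \<forall>x\<in>gr d. smul (const c) x \<in> gr d)) \<and>
     (\<forall>m. \<exists>!c. finite {d. c d \<noteq> 0} \<and> (\<forall>d. c d \<in> gr d) \<and> m = (\<Sum>d\<in>{d. c d \<noteq> 0}. c d)) \<and>
     (\<forall>a d p x. p \<in> homog mdeg a \<longrightarrow> x \<in> gr d \<longrightarrow> smul p x \<in> gr (a + d)) \<and>
     (\<exists>F. finite F \<and> (\<forall>m. \<exists>c. m = (\<Sum>x\<in>F. smul (c x) x)))"

definition graded_hom ::
  "('r \<Rightarrow> 'a::ab_group_add \<Rightarrow> 'a) \<Rightarrow> ('g \<Rightarrow> 'a set) \<Rightarrow> ('r \<Rightarrow> 'b::ab_group_add \<Rightarrow> 'b)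
     \<Rightarrow> ('g \<Rightarrow> 'b set) \<Rightarrow> ('a \<Rightarrow> 'b) \<Rightarrow> bool" where
  "graded_hom smul1 gr1 smul2 gr2 f \<longleftrightarrow>
     (\<forall>x y. f (x + y) = f x + f y) \<and> (\<forall>p x. f (smul1 p x) = smul2 p (f x)) \<and>
     (\<forall>d. f ` gr1 d \<subseteq> gr2 d)"

definition short_exact :: "('a \<Rightarrow> 'b::zero) \<Rightarrow> ('b \<Rightarrow> 'c::zero) \<Rightarrow> bool" where
  "short_exact f g \<longleftrightarrow> inj f \<and> surj g \<and> range f = {m. g m = 0}"

definition stanley_dec ::
  "(('v, 'k::field) mpoly set \<Rightarrow> bool) \<Rightarrow> (('v, 'k) mpoly \<Rightarrow> 'm::ab_group_add \<Rightarrow> 'm)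
     \<Rightarrow> ('g \<Rightarrow> 'm set) \<Rightarrow> (('v, 'k) mpoly set \<times> 'm) list \<Rightarrow> bool" where
  "stanley_dec is_retract smul gr D \<longleftrightarrow>
     (\<forall>i<length D. is_retract (fst (D ! i)) \<and> (\<exists>d. snd (D ! i) \<in> gr d) \<and>
        (\<forall>s\<in>fst (D ! i). smul s (snd (D ! i)) = 0 \<longrightarrow> s = 0)) \<and>
     (\<forall>m. \<exists>!c. (\<forall>i<length D. c i \<in> fst (D ! i)) \<and> (\<forall>i\<ge>length D. c i = 0) \<and>
          m = (\<Sum>i<length D. smul (c i) (snd (D ! i))))"

text \<open>The graded K-vector space (+)_i S_i(-s_i) and its degree d component.\<close>
definition dsum :: "(('v, 'k::zero) mpoly set \<times> 'g) list \<Rightarrow> (nat \<Rightarrow> ('v, 'k) mpoly) set" where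
  "dsum H = {c. (\<forall>i<length H. c i \<in> fst (H ! i)) \<and> (\<forall>i\<ge>length H. c i = 0)}"

definition dsum_deg :: "(('v \<Rightarrow>\<^sub>0 nat) \<Rightarrow> 'g::ab_group_add) \<Rightarrow> (('v, 'k::zero) mpoly set \<times> 'g) list
     \<Rightarrow> 'g \<Rightarrow> (nat \<Rightarrow> ('v, 'k) mpoly) set" where
  "dsum_deg mdeg H d = {c \<in> dsum H. \<forall>i<length H. c i \<in> homog mdeg (d - snd (H ! i))}"

definition hilbert_dec ::
  "(('v, 'k::field) mpoly set \<Rightarrow> bool) \<Rightarrow> (('v \<Rightarrow>\<^sub>0 nat) \<Rightarrow> 'g::ab_group_add)
     \<Rightarrow> (('v, 'k) mpoly \<Rightarrow> 'm::ab_group_add \<Rightarrow> 'm) \<Rightarrow> ('g \<Rightarrow> 'm set)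
     \<Rightarrow> (('v, 'k) mpoly set \<times> 'g) list \<Rightarrow> bool" where
  "hilbert_dec is_retract mdeg smul gr H \<longleftrightarrow>
     (\<forall>i<length H. is_retract (fst (H ! i))) \<and>
     (\<exists>\<phi>. bij_betw \<phi> UNIV (dsum H) \<and> (\<forall>x y. \<phi> (x + y) = \<phi> x + \<phi> y) \<and>
        (\<forall>c x. \<phi> (smul (const c) x) = (\<lambda>i. const c * \<phi> x i)) \<and>
        (\<forall>d. \<phi> ` gr d = dsum_deg mdeg H d))"

definition dec_depth :: "(('v, 'k::comm_ring_1) mpoly set \<times> 'a) list \<Rightarrow> enat" where
  "dec_depth D = (if D = [] then \<infinity> else enat (Min (set (map (\<lambda>p. rdim (fst p)) D))))"

definition has_stanley where
  "has_stanley is_retract smul gr \<longleftrightarrow> (\<exists>D. stanley_dec is_retract smul gr D)"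

definition Stdepth where
  "Stdepth is_retract smul gr = Sup (dec_depth ` {D. stanley_dec is_retract smul gr D})"

definition has_hilbert where
  "has_hilbert is_retract mdeg smul gr \<longleftrightarrow> (\<exists>H. hilbert_dec is_retract mdeg smul gr H)"

definition Hdepth where
  "Hdepth is_retract mdeg smul gr = Sup (dec_depth ` {H. hilbert_dec is_retract mdeg smul gr H})"

end

theory Submission
  imports Defs
begin

text \<open>The sequence splits as graded K-vector spaces: a K-linear section of g, corrected degree
  by degree, is a degree-preserving K-linear section sigma, so M = f(U) \<oplus> sigma(N).
  Concatenating Hilbert decompositions of U and N therefore gives one of M. For Stanley
  decompositions take the pieces (S_i, f u_i) of U together with (S_j, sigma n_j) of N: applying
  g to an element of M determines its coefficients on the second kind of pieces, exactly as in
  N, and the remainder lies in f(U), where the decomposition of U determines the rest. In both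
  cases M gets the retracts of U and of N, so the depths combine by min.\<close>

lemma const_add: "const (a + b) = const a + (const b :: ('v, 'k::comm_ring_1) mpoly)"
  by (simp add: const_def single_add)

lemma const_mult: "const (a * b) = const a * (const b :: ('v, 'k::comm_ring_1) mpoly)"
  by (simp add: const_def mult_single)

lemma const_one: "const 1 = (1 :: ('v, 'k::comm_ring_1) mpoly)"
  by (simp add: const_def)

lemma const_uminus: "const (- a) = - (const a :: ('v, 'k::comm_ring_1) mpoly)"
  by (simp add: const_def single_uminus)

lemma bij_betw_UNIV_iff_ex1: "bij_betw h A UNIV \<longleftrightarrow> (\<forall>y. \<exists>!x. x \<in> A \<and> y = h x)"
  unfolding bij_betw_def inj_on_def by blast

lemma bij_betw_extension:
  fixes f :: "'u \<Rightarrow> 'm::ab_group_add" and g :: "'m \<Rightarrow> 'n::ab_group_add"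
  assumes f: "inj f" and exact: "range f = {m. g m = 0}"
    and g_add: "\<And>x y. g (x + y) = g x + g y"
    and eU: "bij_betw eU A UNIV" and eN: "bij_betw eN B UNIV"
    and E: "\<And>b. b \<in> B \<Longrightarrow> g (E b) = eN b"
  shows "bij_betw (\<lambda>(a, b). f (eU a) + E b) (A \<times> B) UNIV"
proof -
  have g_f: "g (f u) = 0" for u using exact by blast
  have g_diff: "g (x - y) = g x - g y" for x y
    using g_add[of "x - y" y] by (simp add: algebra_simps)
  have inj: "inj_on (\<lambda>(a, b). f (eU a) + E b) (A \<times> B)"
  proof (rule inj_onI, clarify)
    fix a b a' b' assume ab: "a \<in> A" "b \<in> B" "a' \<in> A" "b' \<in> B"
      and eq: "f (eU a) + E b = f (eU a') + E b'"
    have "eN b = eN b'"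
      using arg_cong[OF eq, of g] by (simp add: g_add g_f E ab)
    then have "b = b'" using eN ab unfolding bij_betw_def by (auto dest: inj_onD)
    then have "eU a = eU a'" using eq f by (simp add: inj_eq)
    then show "a = a' \<and> b = b'" using eU ab \<open>b = b'\<close> unfolding bij_betw_def by (auto dest: inj_onD)
  qed
  have "m \<in> (\<lambda>(a, b). f (eU a) + E b) ` (A \<times> B)" for m
  proof -
    obtain b where b: "b \<in> B" "eN b = g m"
      using eN unfolding bij_betw_def by (metis UNIV_I imageE)
    have "m - E b \<in> range f" using exact by (simp add: g_diff E b)
    then obtain a where a: "a \<in> A" "m - E b = f (eU a)"
      using eU unfolding bij_betw_def by (metis UNIV_I imageE rangeE)
    then have "m = f (eU a) + E b" by (simp add: algebra_simps)
    with a b show ?thesis by auto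
  qed
  with inj show ?thesis unfolding bij_betw_def by auto
qed

definition join :: "nat \<Rightarrow> (nat \<Rightarrow> 'a::zero) \<Rightarrow> (nat \<Rightarrow> 'a) \<Rightarrow> nat \<Rightarrow> 'a" where
  "join a c1 c2 = (\<lambda>i. if i < a then c1 i else c2 (i - a))"

lemma join_add:
  fixes c1 c1' c2 c2' :: "nat \<Rightarrow> 'a::monoid_add"
  shows "join a (c1 + c1') (c2 + c2') = join a c1 c2 + join a c1' c2'"
  by (simp add: join_def fun_eq_iff)

lemma dsum_map_snd: "dsum (map (\<lambda>p. (fst p, h (snd p))) H) = dsum H"
  by (simp add: dsum_def)

lemma inj_on_join: "inj_on (\<lambda>(c1, c2). join (length H1) c1 c2) (dsum H1 \<times> dsum H2)"
proof (rule inj_onI, clarify)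
  fix c1 c2 c1' c2' assume c: "c1 \<in> dsum H1" "c1' \<in> dsum H1"
    and eq: "join (length H1) c1 c2 = join (length H1) c1' c2'"
  have "c1 i = c1' i" for i
    using fun_cong[OF eq, of i] c by (cases "i < length H1") (auto simp: join_def dsum_def)
  moreover have "c2 j = c2' j" for j
    using fun_cong[OF eq, of "length H1 + j"] by (simp add: join_def)
  ultimately show "c1 = c1' \<and> c2 = c2'" by (simp add: fun_eq_iff)
qed

lemma dsum_append: "dsum (H1 @ H2) = (\<lambda>(c1, c2). join (length H1) c1 c2) ` (dsum H1 \<times> dsum H2)"
proof (intro equalityI subsetI)
  fix c assume c: "c \<in> dsum (H1 @ H2)"
  let ?c1 = "\<lambda>i. if i < length H1 then c i else 0" and ?c2 = "\<lambda>j. c (length H1 + j)"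
  have ci: "c i \<in> fst ((H1 @ H2) ! i)" if "i < length H1 + length H2" for i
    using c that unfolding dsum_def by simp
  have "?c1 \<in> dsum H1"
    unfolding dsum_def
  proof (intro CollectI conjI allI impI)
    fix i assume "i < length H1"
    then show "?c1 i \<in> fst (H1 ! i)" using ci[of i] by (simp add: nth_append)
  qed simp
  moreover have "?c2 \<in> dsum H2"
    unfolding dsum_def
  proof (intro CollectI conjI allI impI)
    fix j assume "j < length H2"
    then show "?c2 j \<in> fst (H2 ! j)" using ci[of "length H1 + j"] by (simp add: nth_append)
  next
    fix j assume "length H2 \<le> j"
    then show "?c2 j = 0" using c unfolding dsum_def by simp
  qed
  moreover have "c = join (length H1) ?c1 ?c2" by (simp add: join_def fun_eq_iff)
  ultimately show "c \<in> (\<lambda>(c1, c2). join (length H1) c1 c2) ` (dsum H1 \<times> dsum H2)" by force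
next
  fix c assume "c \<in> (\<lambda>(c1, c2). join (length H1) c1 c2) ` (dsum H1 \<times> dsum H2)"
  then obtain c1 c2 where c: "c = join (length H1) c1 c2" "c1 \<in> dsum H1" "c2 \<in> dsum H2"
    by auto
  show "c \<in> dsum (H1 @ H2)"
    unfolding dsum_def
  proof (intro CollectI conjI allI impI)
    fix i assume "i < length (H1 @ H2)"
    then show "c i \<in> fst ((H1 @ H2) ! i)"
      using c unfolding dsum_def by (cases "i < length H1") (auto simp: join_def nth_append)
  next
    fix i assume "length (H1 @ H2) \<le> i"
    then show "c i = 0" using c unfolding dsum_def by (simp add: join_def)
  qed
qed

lemma bij_betw_join:
  "bij_betw (\<lambda>(c1, c2). join (length H1) c1 c2) (dsum H1 \<times> dsum H2) (dsum (H1 @ H2))"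
  unfolding bij_betw_def by (simp add: inj_on_join dsum_append)

lemma dsum_deg_eq_dsum:
  "dsum_deg mdeg H d = dsum (map (\<lambda>p. (fst p \<inter> homog mdeg (d - snd p), snd p)) H)"
  by (auto simp: dsum_deg_def dsum_def)

lemma dsum_deg_append:
  "dsum_deg mdeg (H1 @ H2) d =
     (\<lambda>(c1, c2). join (length H1) c1 c2) ` (dsum_deg mdeg H1 d \<times> dsum_deg mdeg H2 d)"
  unfolding dsum_deg_eq_dsum map_append dsum_append by simp

definition stanley_term :: "(('v, 'k::field) mpoly set \<Rightarrow> bool) \<Rightarrow> (('v, 'k) mpoly \<Rightarrow> 'm::zero \<Rightarrow> 'm)
    \<Rightarrow> ('g \<Rightarrow> 'm set) \<Rightarrow> ('v, 'k) mpoly set \<times> 'm \<Rightarrow> bool" where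
  "stanley_term is_retract smul gr p \<longleftrightarrow>
     is_retract (fst p) \<and> (\<exists>d. snd p \<in> gr d) \<and> (\<forall>s\<in>fst p. smul s (snd p) = 0 \<longrightarrow> s = 0)"

definition stanley_sum :: "('r \<Rightarrow> 'm \<Rightarrow> 'm::comm_monoid_add) \<Rightarrow> ('s \<times> 'm) list \<Rightarrow> (nat \<Rightarrow> 'r) \<Rightarrow> 'm" where
  "stanley_sum smul D c = (\<Sum>i<length D. smul (c i) (snd (D ! i)))"

lemma stanley_dec_iff:
  "stanley_dec is_retract smul gr D \<longleftrightarrow>
     (\<forall>p\<in>set D. stanley_term is_retract smul gr p) \<and> bij_betw (stanley_sum smul D) (dsum D) UNIV"
  unfolding stanley_dec_def bij_betw_UNIV_iff_ex1 all_set_conv_all_nth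
  by (simp add: stanley_term_def stanley_sum_def dsum_def conj_assoc)

lemma stanley_sum_append:
  "stanley_sum smul (D1 @ D2) (join (length D1) c1 c2) = stanley_sum smul D1 c1 + stanley_sum smul D2 c2"
proof -
  have split: "(\<Sum>i<a + b. h i) = (\<Sum>i<a. h i) + (\<Sum>j<b. h (a + j))" for a b and h :: "nat \<Rightarrow> 'a"
    by (induction b) (simp_all add: add.assoc)
  show ?thesis
    unfolding stanley_sum_def length_append split by (simp add: join_def nth_append)
qed

locale graded_mod =
  fixes mdeg :: "('v \<Rightarrow>\<^sub>0 nat) \<Rightarrow> 'g::ab_group_add"
    and smul :: "('v, 'k::field) mpoly \<Rightarrow> 'm::ab_group_add \<Rightarrow> 'm"
    and gr :: "'g \<Rightarrow> 'm set"
  assumes graded: "graded_module mdeg smul gr"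
begin

sublocale module smul
  using graded unfolding graded_module_def by (elim conjE)

definition kscale :: "'k \<Rightarrow> 'm \<Rightarrow> 'm" where
  "kscale c x = smul (const c) x"

lemma vector_space_kscale: "vector_space kscale"
  unfolding vector_space_def kscale_def
  by (simp add: scale_right_distrib const_add scale_left_distrib const_mult const_one)

lemma gr_zero: "0 \<in> gr d"
  and gr_add: "x \<in> gr d \<Longrightarrow> y \<in> gr d \<Longrightarrow> x + y \<in> gr d"
  and gr_const: "x \<in> gr d \<Longrightarrow> smul (const c) x \<in> gr d"
  using graded unfolding graded_module_def by simp_all

lemma gr_diff: "x \<in> gr d \<Longrightarrow> y \<in> gr d \<Longrightarrow> x - y \<in> gr d"
  using gr_add[of x d "smul (const (- 1)) y"] gr_const[of y d "- 1"]
  by (simp add: const_uminus const_one)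

definition hcomp :: "'m \<Rightarrow> 'g \<Rightarrow> 'm" where
  "hcomp m = (THE c. finite {d. c d \<noteq> 0} \<and> (\<forall>d. c d \<in> gr d) \<and> m = (\<Sum>d\<in>{d. c d \<noteq> 0}. c d))"

lemma homogeneous_decomposition_unique:
  "\<exists>!c. finite {d. c d \<noteq> 0} \<and> (\<forall>d. c d \<in> gr d) \<and> m = (\<Sum>d\<in>{d. c d \<noteq> 0}. c d)"
  using graded unfolding graded_module_def by (elim conjE) simp

lemma finite_hcomp: "finite {d. hcomp m d \<noteq> 0}"
  and hcomp_in_gr: "hcomp m d \<in> gr d"
  and sum_hcomp: "m = (\<Sum>d\<in>{d. hcomp m d \<noteq> 0}. hcomp m d)"
  using theI'[OF homogeneous_decomposition_unique[of m]] unfolding hcomp_def by auto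

lemma hcomp_eqI:
  assumes "finite F" "\<And>d. c d \<in> gr d" "\<And>d. d \<notin> F \<Longrightarrow> c d = 0" "m = (\<Sum>d\<in>F. c d)"
  shows "hcomp m = c"
  unfolding hcomp_def
proof (rule the1_equality[OF homogeneous_decomposition_unique], intro conjI allI)
  have sub: "{d. c d \<noteq> 0} \<subseteq> F" using assms(3) by blast
  then show "finite {d. c d \<noteq> 0}" using assms(1) finite_subset by blast
  show "c d \<in> gr d" for d by (rule assms(2))
  have "sum c F = sum c {d. c d \<noteq> 0}"
    by (rule sum.mono_neutral_right[OF assms(1) sub]) auto
  with assms(4) show "m = (\<Sum>d\<in>{d. c d \<noteq> 0}. c d)" by simp
qed

lemma sum_hcomp_superset:
  assumes "finite F" "{d. hcomp m d \<noteq> 0} \<subseteq> F"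
  shows "m = (\<Sum>d\<in>F. hcomp m d)"
  using sum_hcomp[of m] sum.mono_neutral_left[OF assms, of "hcomp m"] by simp

lemma hcomp_add: "hcomp (x + y) = (\<lambda>d. hcomp x d + hcomp y d)"
proof -
  define F where "F = {d. hcomp x d \<noteq> 0} \<union> {d. hcomp y d \<noteq> 0}"
  have F: "finite F" unfolding F_def using finite_hcomp by simp
  have "x + y = (\<Sum>d\<in>F. hcomp x d) + (\<Sum>d\<in>F. hcomp y d)"
    using sum_hcomp_superset[OF F] by (auto simp: F_def)
  then show ?thesis
    by (intro hcomp_eqI[OF F]) (auto simp: F_def hcomp_in_gr gr_add sum.distrib)
qed

lemma hcomp_const: "hcomp (smul (const c) x) = (\<lambda>d. smul (const c) (hcomp x d))"
proof (rule hcomp_eqI[OF finite_hcomp[of x]])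
  have "smul (const c) x = smul (const c) (\<Sum>d\<in>{d. hcomp x d \<noteq> 0}. hcomp x d)"
    using sum_hcomp[of x] by simp
  then show "smul (const c) x = (\<Sum>d\<in>{d. hcomp x d \<noteq> 0}. smul (const c) (hcomp x d))"
    by (simp only: scale_sum_right)
qed (auto simp: hcomp_in_gr gr_const)

lemma hcomp_homogeneous: "x \<in> gr e \<Longrightarrow> hcomp x = (\<lambda>d. if d = e then x else 0)"
  by (rule hcomp_eqI[where F = "{e}"]) (auto simp: gr_zero)

lemma hcomp_zero: "hcomp 0 d = 0"
  using hcomp_homogeneous[OF gr_zero[of d]] by simp

lemma in_gr_iff_hcomp: "x \<in> gr e \<longleftrightarrow> (\<forall>d. d \<noteq> e \<longrightarrow> hcomp x d = 0)"
proof
  assume "\<forall>d. d \<noteq> e \<longrightarrow> hcomp x d = 0"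
  then have "x = hcomp x e" using sum_hcomp_superset[of "{e}" x] by auto
  then show "x \<in> gr e" using hcomp_in_gr[of x e] by simp
qed (simp add: hcomp_homogeneous)

end

locale graded_mod_hom = A: graded_mod mdeg s1 gr1 + B: graded_mod mdeg s2 gr2
  for mdeg :: "('v \<Rightarrow>\<^sub>0 nat) \<Rightarrow> 'g::ab_group_add"
    and s1 :: "('v, 'k::field) mpoly \<Rightarrow> 'a::ab_group_add \<Rightarrow> 'a" and gr1
    and s2 :: "('v, 'k) mpoly \<Rightarrow> 'b::ab_group_add \<Rightarrow> 'b" and gr2 +
  fixes h :: "'a \<Rightarrow> 'b"
  assumes hom: "graded_hom s1 gr1 s2 gr2 h"
begin

lemma hom_add: "h (x + y) = h x + h y"
  and hom_smul: "h (s1 p x) = s2 p (h x)"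
  using hom unfolding graded_hom_def by auto

lemma hom_gr: "x \<in> gr1 d \<Longrightarrow> h x \<in> gr2 d"
  using hom unfolding graded_hom_def by blast

sublocale H: module_hom s1 s2 h
  by unfold_locales (simp_all add: hom_add hom_smul)

lemma linear_kscale: "Vector_Spaces.linear A.kscale B.kscale h"
  using A.vector_space_kscale B.vector_space_kscale
  unfolding module_hom_iff_linear[symmetric] module_hom_iff
  by (simp add: module_iff_vector_space hom_add A.kscale_def B.kscale_def hom_smul)

lemma hom_hcomp: "h (A.hcomp x d) = B.hcomp (h x) d"
proof -
  have "h x = (\<Sum>d\<in>{d. A.hcomp x d \<noteq> 0}. h (A.hcomp x d))"
    using A.sum_hcomp[of x] H.sum by metis
  then have "B.hcomp (h x) = (\<lambda>d. h (A.hcomp x d))"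
    by (intro B.hcomp_eqI[OF A.finite_hcomp]) (auto simp: hom_gr A.hcomp_in_gr)
  then show ?thesis by simp
qed

lemma stanley_sum_map_hom: "stanley_sum s2 (map (\<lambda>p. (fst p, h (snd p))) D) c = h (stanley_sum s1 D c)"
  by (simp add: stanley_sum_def H.sum hom_smul)

end

locale graded_ses = F: graded_mod_hom mdeg smulU grU smulM grM f + G: graded_mod_hom mdeg smulM grM smulN grN g
  for mdeg :: "('v \<Rightarrow>\<^sub>0 nat) \<Rightarrow> 'g::ab_group_add"
    and smulU :: "('v, 'k::field) mpoly \<Rightarrow> 'u::ab_group_add \<Rightarrow> 'u" and grU
    and smulM :: "('v, 'k) mpoly \<Rightarrow> 'm::ab_group_add \<Rightarrow> 'm" and grM
    and smulN :: "('v, 'k) mpoly \<Rightarrow> 'n::ab_group_add \<Rightarrow> 'n" and grN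
    and f g +
  assumes exact: "short_exact f g"
begin

lemma inj_f: "inj f" and surj_g: "surj g" and range_f: "range f = {m. g m = 0}"
  using exact unfolding short_exact_def by auto

lemma g_f: "g (f u) = 0"
  using range_f by blast

lemma linear_section_exists:
  "\<exists>s. Vector_Spaces.linear G.B.kscale F.B.kscale s \<and> g \<circ> s = id"
  using F.B.vector_space_kscale G.B.vector_space_kscale G.linear_kscale surj_g
  by (intro vector_space_pair.linear_surjective_right_inverse) (simp_all add: vector_space_pair_def)

definition linear_section :: "'n \<Rightarrow> 'm" where
  "linear_section = (SOME s. Vector_Spaces.linear G.B.kscale F.B.kscale s \<and> g \<circ> s = id)"

lemma linear_section: "module_hom G.B.kscale F.B.kscale linear_section" "g (linear_section y) = y"
  using someI_ex[OF linear_section_exists] unfolding linear_section_def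
  by (auto simp: module_hom_iff_linear fun_eq_iff)

text \<open>A K-linear section of g need not preserve degrees; taking on each homogeneous
  component of y the component of the same degree of its image repairs this.\<close>

definition sigma :: "'n \<Rightarrow> 'm" where
  "sigma y = (\<Sum>d\<in>{d. G.B.hcomp y d \<noteq> 0}. F.B.hcomp (linear_section (G.B.hcomp y d)) d)"

lemma sigma_superset:
  assumes "finite D" "{d. G.B.hcomp y d \<noteq> 0} \<subseteq> D"
  shows "sigma y = (\<Sum>d\<in>D. F.B.hcomp (linear_section (G.B.hcomp y d)) d)"
  unfolding sigma_def
  by (rule sum.mono_neutral_left[OF assms])
    (auto simp: module_hom.zero[OF linear_section(1)] F.B.hcomp_zero)

lemma sigma_add: "sigma (y + z) = sigma y + sigma z"
proof -
  define D where "D = {d. G.B.hcomp y d \<noteq> 0} \<union> {d. G.B.hcomp z d \<noteq> 0}"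
  have D: "finite D" unfolding D_def using G.B.finite_hcomp by simp
  have "sigma (y + z) = (\<Sum>d\<in>D. F.B.hcomp (linear_section (G.B.hcomp (y + z) d)) d)"
    by (rule sigma_superset[OF D]) (auto simp: D_def G.B.hcomp_add)
  also have "\<dots> = (\<Sum>d\<in>D. F.B.hcomp (linear_section (G.B.hcomp y d)) d + F.B.hcomp (linear_section (G.B.hcomp z d)) d)"
    by (simp add: G.B.hcomp_add module_hom.add[OF linear_section(1)] F.B.hcomp_add)
  also have "\<dots> = sigma y + sigma z"
    by (simp add: sum.distrib sigma_superset[OF D] D_def)
  finally show ?thesis .
qed

lemma sigma_const: "sigma (smulN (const c) y) = smulM (const c) (sigma y)"
proof -
  define D where "D = {d. G.B.hcomp y d \<noteq> 0}"
  have D: "finite D" unfolding D_def by (rule G.B.finite_hcomp)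
  have "sigma (smulN (const c) y) = (\<Sum>d\<in>D. F.B.hcomp (linear_section (G.B.hcomp (smulN (const c) y) d)) d)"
    by (rule sigma_superset[OF D]) (auto simp: D_def G.B.hcomp_const)
  also have "\<dots> = (\<Sum>d\<in>D. smulM (const c) (F.B.hcomp (linear_section (G.B.hcomp y d)) d))"
    using module_hom.scale[OF linear_section(1)]
    by (simp add: G.B.hcomp_const F.B.hcomp_const G.B.kscale_def F.B.kscale_def)
  also have "\<dots> = smulM (const c) (sigma y)"
    by (simp add: sigma_def D_def F.B.scale_sum_right)
  finally show ?thesis .
qed

lemma sigma_gr: "y \<in> grN e \<Longrightarrow> sigma y \<in> grM e"
proof -
  assume "y \<in> grN e"
  then have "sigma y = (\<Sum>d\<in>{e}. F.B.hcomp (linear_section (G.B.hcomp y d)) d)"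
    by (intro sigma_superset) (auto simp: G.B.hcomp_homogeneous)
  then show ?thesis by (simp add: F.B.hcomp_in_gr)
qed

lemma g_sigma: "g (sigma y) = y"
proof -
  have "g (sigma y) = (\<Sum>d\<in>{d. G.B.hcomp y d \<noteq> 0}. G.B.hcomp y d)"
    unfolding sigma_def G.H.sum
    by (simp add: G.hom_hcomp linear_section(2) G.B.hcomp_homogeneous[OF G.B.hcomp_in_gr])
  then show ?thesis using G.B.sum_hcomp[of y] by simp
qed

definition retraction :: "'m \<Rightarrow> 'u" where
  "retraction m = inv f (m - sigma (g m))"

lemma f_retraction: "f (retraction m) = m - sigma (g m)"
proof -
  have "m - sigma (g m) \<in> range f"
    using range_f by (simp add: G.H.diff g_sigma)
  then show ?thesis unfolding retraction_def by (rule f_inv_into_f)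
qed

lemma g_f_add_sigma: "g (f u + sigma n) = n"
  by (simp add: G.hom_add g_f g_sigma)

lemma retraction_f_add_sigma: "retraction (f u + sigma n) = u"
  using f_retraction[of "f u + sigma n"] inj_f by (simp add: g_f_add_sigma inj_eq)

lemma f_retraction_add_sigma_g: "f (retraction m) + sigma (g m) = m"
  by (simp add: f_retraction)

lemma f_eq_zero_iff: "f u = 0 \<longleftrightarrow> u = 0"
  using inj_f F.H.zero by (metis injD)

lemma retraction_add: "retraction (x + y) = retraction x + retraction y"
proof -
  have "f (retraction (x + y)) = f (retraction x + retraction y)"
    by (simp add: f_retraction F.hom_add G.hom_add sigma_add algebra_simps)
  then show ?thesis by (rule injD[OF inj_f])
qed

lemma retraction_const: "retraction (smulM (const c) x) = smulU (const c) (retraction x)"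
proof -
  have "f (retraction (smulM (const c) x)) = f (smulU (const c) (retraction x))"
    by (simp add: f_retraction F.hom_smul G.hom_smul sigma_const F.B.scale_right_diff_distrib)
  then show ?thesis by (rule injD[OF inj_f])
qed

lemma f_in_grD: "f u \<in> grM d \<Longrightarrow> u \<in> grU d"
  by (simp add: F.A.in_gr_iff_hcomp F.B.in_gr_iff_hcomp F.hom_hcomp[symmetric] f_eq_zero_iff)

lemma retraction_gr: "m \<in> grM d \<Longrightarrow> retraction m \<in> grU d"
  by (intro f_in_grD) (simp add: f_retraction F.B.gr_diff sigma_gr G.hom_gr)

lemma bij_retraction_g: "bij_betw (\<lambda>m. (retraction m, g m)) UNIV UNIV"
  by (rule bij_betw_byWitness[where f' = "\<lambda>(u, n). f u + sigma n"])
    (auto simp: f_retraction_add_sigma_g retraction_f_add_sigma g_f_add_sigma)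

lemma retraction_g_image_gr: "(\<lambda>m. (retraction m, g m)) ` grM d = grU d \<times> grN d"
proof (intro equalityI subsetI)
  fix p assume "p \<in> grU d \<times> grN d"
  then have "f (fst p) + sigma (snd p) \<in> grM d"
    by (auto intro!: F.B.gr_add F.hom_gr sigma_gr)
  then show "p \<in> (\<lambda>m. (retraction m, g m)) ` grM d"
    by (rule rev_image_eqI) (simp add: retraction_f_add_sigma g_f_add_sigma)
qed (auto simp: retraction_gr G.hom_gr)

lemma stanley_term_f:
  "stanley_term is_retract smulU grU p \<Longrightarrow> stanley_term is_retract smulM grM (fst p, f (snd p))"
  unfolding stanley_term_def
  by (auto simp: F.hom_smul[symmetric] f_eq_zero_iff dest: F.hom_gr)

lemma stanley_term_sigma:
  "stanley_term is_retract smulN grN p \<Longrightarrow> stanley_term is_retract smulM grM (fst p, sigma (snd p))"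
  unfolding stanley_term_def
  by (auto dest: sigma_gr arg_cong[of _ 0 g] simp: G.hom_smul g_sigma)

definition stanley_lift where
  "stanley_lift DU DN = map (\<lambda>p. (fst p, f (snd p))) DU @ map (\<lambda>p. (fst p, sigma (snd p))) DN"

lemma stanley_dec_lift:
  assumes DU: "stanley_dec is_retract smulU grU DU" and DN: "stanley_dec is_retract smulN grN DN"
  shows "stanley_dec is_retract smulM grM (stanley_lift DU DN)"
  unfolding stanley_dec_iff
proof
  show "\<forall>p\<in>set (stanley_lift DU DN). stanley_term is_retract smulM grM p"
    using DU DN unfolding stanley_lift_def stanley_dec_iff
    by (auto intro: stanley_term_f stanley_term_sigma)
  let ?DN' = "map (\<lambda>p. (fst p, sigma (snd p))) DN"
  have "bij_betw (stanley_sum smulU DU) (dsum DU) UNIV" "bij_betw (stanley_sum smulN DN) (dsum DN) UNIV"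
    using DU DN by (simp_all add: stanley_dec_iff)
  moreover have "g (stanley_sum smulM ?DN' c) = stanley_sum smulN DN c" for c
    by (simp add: stanley_sum_def G.H.sum G.hom_smul g_sigma)
  ultimately have "bij_betw (\<lambda>(a, b). f (stanley_sum smulU DU a) + stanley_sum smulM ?DN' b)
      (dsum DU \<times> dsum DN) UNIV"
    by (intro bij_betw_extension[OF inj_f range_f G.hom_add])
  moreover have "(\<lambda>(a, b). f (stanley_sum smulU DU a) + stanley_sum smulM ?DN' b) =
      stanley_sum smulM (stanley_lift DU DN) \<circ> (\<lambda>(a, b). join (length DU) a b)"
    using stanley_sum_append[of smulM "map (\<lambda>p. (fst p, f (snd p))) DU"]
    by (auto simp: stanley_lift_def F.stanley_sum_map_hom)
  moreover have "bij_betw (\<lambda>(a, b). join (length DU) a b) (dsum DU \<times> dsum DN) (dsum (stanley_lift DU DN))"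
    using bij_betw_join[of "map (\<lambda>p. (fst p, f (snd p))) DU" ?DN']
    by (simp add: stanley_lift_def dsum_map_snd)
  ultimately show "bij_betw (stanley_sum smulM (stanley_lift DU DN)) (dsum (stanley_lift DU DN)) UNIV"
    by (simp add: bij_betw_comp_iff)
qed

lemma hilbert_dec_append:
  assumes HU: "hilbert_dec is_retract mdeg smulU grU HU" and HN: "hilbert_dec is_retract mdeg smulN grN HN"
  shows "hilbert_dec is_retract mdeg smulM grM (HU @ HN)"
proof -
  obtain pU where pU: "bij_betw pU UNIV (dsum HU)" "\<And>x y. pU (x + y) = pU x + pU y"
      "\<And>c x. pU (smulU (const c) x) = (\<lambda>i. const c * pU x i)" "\<And>d. pU ` grU d = dsum_deg mdeg HU d"
    using HU unfolding hilbert_dec_def by blast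
  obtain pN where pN: "bij_betw pN UNIV (dsum HN)" "\<And>x y. pN (x + y) = pN x + pN y"
      "\<And>c x. pN (smulN (const c) x) = (\<lambda>i. const c * pN x i)" "\<And>d. pN ` grN d = dsum_deg mdeg HN d"
    using HN unfolding hilbert_dec_def by blast
  let ?J = "\<lambda>(c1, c2). join (length HU) c1 c2"
  define phi where "phi = ?J \<circ> map_prod pU pN \<circ> (\<lambda>m. (retraction m, g m))"
  have "bij_betw (map_prod pU pN) UNIV (dsum HU \<times> dsum HN)"
    using bij_betw_map_prod[OF pU(1) pN(1)] by simp
  then have "bij_betw phi UNIV (dsum (HU @ HN))"
    unfolding phi_def by (rule bij_betw_trans[OF bij_retraction_g bij_betw_trans[OF _ bij_betw_join]])
  moreover have "phi (x + y) = phi x + phi y" for x y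
    by (simp add: phi_def retraction_add G.hom_add pU(2) pN(2) join_add)
  moreover have "phi (smulM (const c) x) = (\<lambda>i. const c * phi x i)" for c x
    by (simp add: phi_def retraction_const G.hom_smul pU(3) pN(3) join_def fun_eq_iff)
  moreover have "phi ` grM d = dsum_deg mdeg (HU @ HN) d" for d
    unfolding phi_def image_comp[symmetric] retraction_g_image_gr dsum_deg_append
    by (simp add: map_prod_surj_on pU(4) pN(4))
  ultimately show ?thesis
    using HU HN unfolding hilbert_dec_def by (auto simp: nth_append)
qed

end

lemma dec_depth_map_snd: "dec_depth (map (\<lambda>p. (fst p, h (snd p))) D) = dec_depth D"
  by (simp add: dec_depth_def comp_def)

lemma dec_depth_append: "dec_depth (A @ B) = min (dec_depth A) (dec_depth B)"
  by (cases "A = []"; cases "B = []") (simp_all add: dec_depth_def Min_Un)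

lemma min_Sup_le_Sup:
  fixes A B C :: "enat set"
  assumes "\<And>a b. a \<in> A \<Longrightarrow> b \<in> B \<Longrightarrow> min a b \<in> C"
  shows "min (Sup A) (Sup B) \<le> Sup C"
proof (rule ccontr)
  assume "\<not> min (Sup A) (Sup B) \<le> Sup C"
  then obtain a b where "a \<in> A" "b \<in> B" "Sup C < a" "Sup C < b"
    by (auto simp: not_le less_Sup_iff)
  then show False using assms[of a b] Sup_upper[of "min a b" C] by (auto simp: min_def split: if_splits)
qed

context graded_ses
begin

lemma has_stanley_middle:
  "has_stanley is_retract smulU grU \<Longrightarrow> has_stanley is_retract smulN grN \<Longrightarrow> has_stanley is_retract smulM grM"
  unfolding has_stanley_def using stanley_dec_lift by blast

lemma Stdepth_middle_ge: "min (Stdepth is_retract smulU grU) (Stdepth is_retract smulN grN) \<le> Stdepth is_retract smulM grM"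
  unfolding Stdepth_def
proof (rule min_Sup_le_Sup, clarify)
  fix DU DN assume "stanley_dec is_retract smulU grU DU" "stanley_dec is_retract smulN grN DN"
  then have "stanley_dec is_retract smulM grM (stanley_lift DU DN)" by (rule stanley_dec_lift)
  moreover have "dec_depth (stanley_lift DU DN) = min (dec_depth DU) (dec_depth DN)"
    by (simp add: stanley_lift_def dec_depth_append dec_depth_map_snd)
  ultimately show "min (dec_depth DU) (dec_depth DN) \<in> dec_depth ` {D. stanley_dec is_retract smulM grM D}"
    by (metis (mono_tags) imageI mem_Collect_eq)
qed

lemma has_hilbert_middle:
  "has_hilbert is_retract mdeg smulU grU \<Longrightarrow> has_hilbert is_retract mdeg smulN grN \<Longrightarrow> has_hilbert is_retract mdeg smulM grM"
  unfolding has_hilbert_def using hilbert_dec_append by blast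

lemma Hdepth_middle_ge:
  "min (Hdepth is_retract mdeg smulU grU) (Hdepth is_retract mdeg smulN grN) \<le> Hdepth is_retract mdeg smulM grM"
  unfolding Hdepth_def
proof (rule min_Sup_le_Sup, clarify)
  fix HU HN assume "hilbert_dec is_retract mdeg smulU grU HU" "hilbert_dec is_retract mdeg smulN grN HN"
  then have "hilbert_dec is_retract mdeg smulM grM (HU @ HN)" by (rule hilbert_dec_append)
  then show "min (dec_depth HU) (dec_depth HN) \<in> dec_depth ` {H. hilbert_dec is_retract mdeg smulM grM H}"
    by (metis (mono_tags) dec_depth_append imageI mem_Collect_eq)
qed

end

lemma graded_ses_iff:
  "graded_ses mdeg smulU grU smulM grM smulN grN f g \<longleftrightarrow>
     graded_module mdeg smulU grU \<and> graded_module mdeg smulM grM \<and> graded_module mdeg smulN grN \<and>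
     graded_hom smulU grU smulM grM f \<and> graded_hom smulM grM smulN grN g \<and> short_exact f g"
  by (auto simp: graded_ses_def graded_ses_axioms_def graded_mod_hom_def graded_mod_hom_axioms_def
      graded_mod_def)

theorem proposition2p6:
  shows
  "(\<forall>(smulU :: ('v::finite, 'k::field) mpoly \<Rightarrow> 'u::ab_group_add \<Rightarrow> 'u)
      (grU :: ('v \<Rightarrow> int) \<Rightarrow> 'u set)
      (smulM :: ('v, 'k) mpoly \<Rightarrow> 'm::ab_group_add \<Rightarrow> 'm) (grM :: ('v \<Rightarrow> int) \<Rightarrow> 'm set)
      (smulN :: ('v, 'k) mpoly \<Rightarrow> 'n::ab_group_add \<Rightarrow> 'n) (grN :: ('v \<Rightarrow> int) \<Rightarrow> 'n set)
      (f :: 'u \<Rightarrow> 'm) (g :: 'm \<Rightarrow> 'n).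
      graded_module mdeg_multi smulU grU \<and> graded_module mdeg_multi smulM grM \<and>
      graded_module mdeg_multi smulN grN \<and>
      graded_hom smulU grU smulM grM f \<and> graded_hom smulM grM smulN grN g \<and> short_exact f g \<longrightarrow>
      ((has_stanley retract_multi smulU grU \<and> has_stanley retract_multi smulN grN \<longrightarrow>
          has_stanley retract_multi smulM grM \<and>
          Stdepth retract_multi smulM grM \<ge>
            min (Stdepth retract_multi smulU grU) (Stdepth retract_multi smulN grN)) \<and>
       (has_hilbert retract_multi mdeg_multi smulU grU \<and> has_hilbert retract_multi mdeg_multi smulN grN \<longrightarrow>
          has_hilbert retract_multi mdeg_multi smulM grM \<and>
          Hdepth retract_multi mdeg_multi smulM grM \<ge>
            min (Hdepth retract_multi mdeg_multi smulU grU) (Hdepth retract_multi mdeg_multi smulN grN))))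
   \<and>
   (\<forall>(smulU :: ('v, 'k) mpoly \<Rightarrow> 'u \<Rightarrow> 'u) (grU :: int \<Rightarrow> 'u set)
      (smulM :: ('v, 'k) mpoly \<Rightarrow> 'm \<Rightarrow> 'm) (grM :: int \<Rightarrow> 'm set)
      (smulN :: ('v, 'k) mpoly \<Rightarrow> 'n \<Rightarrow> 'n) (grN :: int \<Rightarrow> 'n set)
      (f :: 'u \<Rightarrow> 'm) (g :: 'm \<Rightarrow> 'n).
      graded_module mdeg_std smulU grU \<and> graded_module mdeg_std smulM grM \<and>
      graded_module mdeg_std smulN grN \<and>
      graded_hom smulU grU smulM grM f \<and> graded_hom smulM grM smulN grN g \<and> short_exact f g \<longrightarrow>
      ((has_stanley retract_std smulU grU \<and> has_stanley retract_std smulN grN \<longrightarrow>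
          has_stanley retract_std smulM grM \<and>
          Stdepth retract_std smulM grM \<ge>
            min (Stdepth retract_std smulU grU) (Stdepth retract_std smulN grN)) \<and>
       (has_hilbert retract_std mdeg_std smulU grU \<and> has_hilbert retract_std mdeg_std smulN grN \<longrightarrow>
          has_hilbert retract_std mdeg_std smulM grM \<and>
          Hdepth retract_std mdeg_std smulM grM \<ge>
            min (Hdepth retract_std mdeg_std smulU grU) (Hdepth retract_std mdeg_std smulN grN))))"
  by (simp add: graded_ses_iff[symmetric] graded_ses.has_stanley_middle graded_ses.Stdepth_middle_ge
      graded_ses.has_hilbert_middle graded_ses.Hdepth_middle_ge)

end
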